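(* Let $1\le k\le n$. The image of the map $P:P\Lambda^{n-k,k}\to\mathcal{P}^k(SM_n)$, $\tau\mapsto P_\tau$, coincides with the space $\mathcal{M}_k$ spanned by the $(k\times k)$-minors.
   Context: On $\mathbb{R}^n\times(\mathbb{R}^n)^*$ with coordinates $(x,y)$ and symplectic form $\omega_s=\sum_i dx_i\wedge dy_i$, $\Lambda^{n-k,k}$ is the space of constant complex $n$-forms that are linear combinations of $dx_I\wedge dy_J$ with $|I|=n-k$, $|J|=k$, and $P\Lambda^{n-k,k}=\{\tau\in\Lambda^{n-k,k}:\omega_s\wedge\tau=0\}$ (primitive forms). Each such $\tau$ is extended $\mathbb{C}$-linearly to a constant holomorphic form on $\mathbb{C}^n\times(\mathbb{C}^n)^*$ with coordinates $(z,w)$ ($dx_i\mapsto dz_i$, $dy_i\mapsto dw_i$). $SM_n$ denotes complex symmetric $(n\times n)$-matrices, $\mathcal{P}^k(SM_n)$ the $k$-homogeneous polynomials on it, and $\mathcal{M}_k\subset\mathcal{P}^k(SM_n)$ the span of the $(k\times k)$-minors. For $Q\in SM_n$ let $F_Q:\mathbb{C}^n\to\mathbb{C}^n\times(\mathbb{C}^n)^*$, $F_Q(z)=(z,z^TQ)$; then $P_\tau\in\mathcal{P}^k(SM_n)$ is the unique polynomial with $F_Q^*\tau=P_\tau(Q)\,dz_1\wedge\dots\wedge dz_n$. *)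

theory Defs
  imports Complex_Main "Jordan_Normal_Form.Determinant" "Jordan_Normal_Form.DL_Submatrix"
begin

text \<open>Constant complex forms on C^n x (C^n)^* (coordinates z_0..z_(n-1), w_0..w_(n-1)).
  Generators of the exterior algebra are indexed by nat: index i < n stands for dz_i (= dx_i),
  index n + j stands for dw_j (= dy_j).  A form is given by its coefficient function on
  finite sets S of generators; S stands for the wedge of the generators in S in increasing order.\<close>

type_synonym cform = "nat set \<Rightarrow> complex"

definition wsign :: "nat set \<Rightarrow> nat set \<Rightarrow> complex" where
  "wsign S T = (-1) ^ card {(s, t). s \<in> S \<and> t \<in> T \<and> t < s}"

text \<open>Wedge product: e_S wedge e_T = wsign S T * e_(S union T) if S, T disjoint, 0 otherwise.\<close>
definition wedge :: "cform \<Rightarrow> cform \<Rightarrow> cform" where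
  "wedge \<alpha> \<beta> U = (\<Sum>S\<in>Pow U. wsign S (U - S) * \<alpha> S * \<beta> (U - S))"

definition unit_form :: cform where
  "unit_form S = (if S = {} then 1 else 0)"

definition wedge_list :: "cform list \<Rightarrow> cform" where
  "wedge_list xs = foldr wedge xs unit_form"

text \<open>The standard symplectic form omega_s = sum_i dx_i wedge dy_i.\<close>
definition omega_s :: "nat \<Rightarrow> cform" where
  "omega_s n S = (if \<exists>i<n. S = {i, n + i} then 1 else 0)"

text \<open>Lambda^(n-k,k): combinations of dx_I wedge dy_J with |I| = n-k, |J| = k.\<close>
definition Lambda :: "nat \<Rightarrow> nat \<Rightarrow> cform set" where
  "Lambda n k = {\<tau>. \<forall>S. \<tau> S \<noteq> 0 \<longrightarrow>
      S \<subseteq> {0..<2*n} \<and> card (S \<inter> {0..<n}) = n - k \<and> card (S \<inter> {n..<2*n}) = k}"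

definition PLambda :: "nat \<Rightarrow> nat \<Rightarrow> cform set" where
  "PLambda n k = {\<tau> \<in> Lambda n k. wedge (omega_s n) \<tau> = (\<lambda>_. 0)}"

definition SM :: "nat \<Rightarrow> complex mat set" where
  "SM n = {Q. Q \<in> carrier_mat n n \<and> transpose_mat Q = Q}"

text \<open>Pullback along F_Q(z) = (z, z^T Q) of the generator with index s, as a 1-form in dz:
  dz_s pulls back to dz_s, and dw_j pulls back to sum_i Q_(i,j) dz_i.\<close>
definition pull1 :: "nat \<Rightarrow> complex mat \<Rightarrow> nat \<Rightarrow> cform" where
  "pull1 n Q s T = (if \<exists>i<n. T = {i} then
      (let i = (THE i. T = {i}) in
        if s < n then (if s = i then 1 else 0) else Q $$ (i, s - n))
    else 0)"

text \<open>F_Q^* tau = P_tau(Q) dz_0 wedge ... wedge dz_(n-1).\<close>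
definition P_form :: "nat \<Rightarrow> cform \<Rightarrow> complex mat \<Rightarrow> complex" where
  "P_form n \<tau> Q = (\<Sum>S\<in>{S. S \<subseteq> {0..<2*n}}.
      \<tau> S * wedge_list (map (pull1 n Q) (sorted_list_of_set S)) {0..<n})"

definition minor :: "complex mat \<Rightarrow> nat set \<Rightarrow> nat set \<Rightarrow> complex" where
  "minor Q R C = det (submatrix Q R C)"

definition minor_index :: "nat \<Rightarrow> nat \<Rightarrow> (nat set \<times> nat set) set" where
  "minor_index n k = {(R, C). R \<subseteq> {0..<n} \<and> C \<subseteq> {0..<n} \<and> card R = k \<and> card C = k}"

definition M_span :: "nat \<Rightarrow> nat \<Rightarrow> (complex mat \<Rightarrow> complex) set" where
  "M_span n k = {restrict (\<lambda>Q. \<Sum>RC\<in>minor_index n k. c RC * minor Q (fst RC) (snd RC)) (SM n)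
                 | c. True}"

end

theory Submission
  imports Defs
begin

(* Under F_Q the generators pull back to dz_i and to the one-forms sum_i Q_ij dz_i, so the
   pullback of dx_I ^ dy_J is, up to sign, the minor of Q with rows {0..<n} - I and columns J;
   hence P maps Lambda^(n-k,k) into M_k.
   Conversely, fix a minor with rows R and columns C, let m = |C - R| and let X range over the
   m-subsets of the symmetric difference of R and C.  The form
     tau = sum_X (+-) (-1)^j j! (m - j)! dx_(B u X) ^ dy_((R n C) u X),   j = |X n (C - R)|,
   with B the complement of R u C, is primitive: the factorial weights cancel in omega_s ^ tau.
   The graph of a symmetric Q is Lagrangian, so F_Q^*(omega_s ^ sigma) = 0 for every sigma; these
   relations collapse P_tau onto the single term X = C - R, a nonzero multiple of minor R C. *)

section \<open>Wedge products of one-forms\<close>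

definition one_form :: "cform \<Rightarrow> bool" where
  "one_form a \<longleftrightarrow> (\<forall>T. a T \<noteq> 0 \<longrightarrow> (\<exists>x. T = {x}))"

definition below_sign :: "nat \<Rightarrow> nat set \<Rightarrow> complex" where
  "below_sign u U = (-1) ^ card {t\<in>U. t < u}"

lemma below_sign_cases: "below_sign u U = 1 \<or> below_sign u U = -1"
proof -
  have "(-1::complex) ^ c = 1 \<or> (-1::complex) ^ c = -1" for c by (induction c) auto
  then show ?thesis unfolding below_sign_def .
qed

lemma below_sign_remove_less:
  assumes "finite U" "u \<in> U" "v \<in> U" "u < v"
  shows "below_sign v U = - below_sign v (U - {u})" "below_sign u (U - {v}) = below_sign u U"
proof -
  have "{t\<in>U. t < v} = insert u {t\<in>U - {u}. t < v}" using assms by auto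
  then have "card {t\<in>U. t < v} = Suc (card {t\<in>U - {u}. t < v})" using assms by simp
  then show "below_sign v U = - below_sign v (U - {u})" unfolding below_sign_def by simp
  have "{t\<in>U - {v}. t < u} = {t\<in>U. t < u}" using assms by auto
  then show "below_sign u (U - {v}) = below_sign u U" unfolding below_sign_def by simp
qed

lemma below_sign_swap:
  assumes "finite U" "u \<in> U" "v \<in> U" "u \<noteq> v"
  shows "below_sign u (U - {u}) * below_sign v (U - {u} - {v})
       = - (below_sign v (U - {v}) * below_sign u (U - {v} - {u}))"
proof -
  have e: "below_sign x (U - {x}) = below_sign x U" for x
    unfolding below_sign_def by (rule arg_cong[where f="\<lambda>S. _ ^ card S"]) auto
  have e2: "below_sign x (U - {y} - {x}) = below_sign x (U - {y})" for x y
    unfolding below_sign_def by (rule arg_cong[where f="\<lambda>S. _ ^ card S"]) auto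
  show ?thesis
  proof (cases "u < v")
    case True
    then show ?thesis using below_sign_remove_less[OF assms(1,2,3) True] by (simp add: e e2)
  next
    case False
    then have "v < u" using assms by simp
    then show ?thesis using below_sign_remove_less[OF assms(1,3,2)] by (simp add: e e2)
  qed
qed

lemma wedge_infinite_eq_0: "infinite U \<Longrightarrow> wedge a b U = 0"
  unfolding wedge_def by simp

lemma wedge_mult_right: "wedge a (\<lambda>U. c * b U) U = c * wedge a b U"
  unfolding wedge_def by (simp add: sum_distrib_left algebra_simps)

lemma wedge_zero_right: "wedge a (\<lambda>_. 0) U = 0"
  unfolding wedge_def by simp

lemma wedge_sum_left:
  "wedge (\<lambda>T. \<Sum>j\<in>A. c j * a j T) g U = (\<Sum>j\<in>A. c j * wedge (a j) g U)"
proof -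
  have "wedge (\<lambda>T. \<Sum>j\<in>A. c j * a j T) g U
      = (\<Sum>S\<in>Pow U. \<Sum>j\<in>A. c j * (wsign S (U - S) * a j S * g (U - S)))"
    unfolding wedge_def by (intro sum.cong refl) (simp add: sum_distrib_left sum_distrib_right mult_ac)
  also have "\<dots> = (\<Sum>j\<in>A. \<Sum>S\<in>Pow U. c j * (wsign S (U - S) * a j S * g (U - S)))"
    by (rule sum.swap)
  also have "\<dots> = (\<Sum>j\<in>A. c j * wedge (a j) g U)"
    unfolding wedge_def by (simp add: sum_distrib_left)
  finally show ?thesis .
qed

lemma wedge_sum_right:
  "wedge a (\<lambda>T. \<Sum>j\<in>A. c j * g j T) U = (\<Sum>j\<in>A. c j * wedge a (g j) U)"
proof -
  have "wedge a (\<lambda>T. \<Sum>j\<in>A. c j * g j T) U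
      = (\<Sum>S\<in>Pow U. \<Sum>j\<in>A. c j * (wsign S (U - S) * a S * g j (U - S)))"
    unfolding wedge_def by (intro sum.cong refl) (simp add: sum_distrib_left sum_distrib_right mult_ac)
  also have "\<dots> = (\<Sum>j\<in>A. \<Sum>S\<in>Pow U. c j * (wsign S (U - S) * a S * g j (U - S)))"
    by (rule sum.swap)
  also have "\<dots> = (\<Sum>j\<in>A. c j * wedge a (g j) U)"
    unfolding wedge_def by (simp add: sum_distrib_left)
  finally show ?thesis .
qed

lemma wsign_singleton: "finite U \<Longrightarrow> wsign {u} U = below_sign u U"
proof -
  assume U: "finite U"
  have "{(s, t). s \<in> {u} \<and> t \<in> U \<and> t < s} = (\<lambda>t. (u,t)) ` {t\<in>U. t < u}" by auto
  moreover have "card ((\<lambda>t. (u,t)) ` {t\<in>U. t < u}) = card {t\<in>U. t < u}"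
    by (rule card_image) (auto simp: inj_on_def)
  ultimately show ?thesis unfolding wsign_def below_sign_def by simp
qed

lemma wsign_pair:
  assumes "i < n" "finite T"
  shows "wsign {i, n + i} T = (-1) ^ card {t\<in>T. t < i} * (-1) ^ card {t\<in>T. t < n + i}"
proof -
  have e: "{(s, t). s \<in> {i, n + i} \<and> t \<in> T \<and> t < s}
      = (\<lambda>t. (i, t)) ` {t\<in>T. t < i} \<union> (\<lambda>t. (n + i, t)) ` {t\<in>T. t < n + i}"
    by auto
  have "card ((\<lambda>t. (i, t)) ` {t\<in>T. t < i} \<union> (\<lambda>t. (n + i, t)) ` {t\<in>T. t < n + i})
      = card ((\<lambda>t. (i, t)) ` {t\<in>T. t < i}) + card ((\<lambda>t. (n + i, t)) ` {t\<in>T. t < n + i})"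
    using assms by (intro card_Un_disjoint) auto
  also have "\<dots> = card {t\<in>T. t < i} + card {t\<in>T. t < n + i}"
    by (simp add: card_image inj_on_def)
  finally show ?thesis unfolding wsign_def e by (simp add: power_add)
qed

lemma wedge_one_form_left:
  assumes a: "one_form a" and U: "finite U"
  shows "wedge a b U = (\<Sum>u\<in>U. below_sign u (U - {u}) * a {u} * b (U - {u}))"
proof -
  have "wedge a b U = (\<Sum>S\<in>(\<lambda>u. {u}) ` U. wsign S (U - S) * a S * b (U - S))"
    unfolding wedge_def
  proof (rule sum.mono_neutral_right)
    show "finite (Pow U)" using U by simp
    show "(\<lambda>u. {u}) ` U \<subseteq> Pow U" by auto
    show "\<forall>S\<in>Pow U - (\<lambda>u. {u}) ` U. wsign S (U - S) * a S * b (U - S) = 0"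
    proof
      fix S assume "S \<in> Pow U - (\<lambda>u. {u}) ` U"
      then have "a S = 0" using a unfolding one_form_def
        by (metis DiffD1 DiffD2 PowD image_eqI insert_subset)
      then show "wsign S (U - S) * a S * b (U - S) = 0" by simp
    qed
  qed
  also have "\<dots> = (\<Sum>u\<in>U. wsign {u} (U - {u}) * a {u} * b (U - {u}))"
    by (subst sum.reindex) (auto simp: inj_on_def)
  also have "\<dots> = (\<Sum>u\<in>U. below_sign u (U - {u}) * a {u} * b (U - {u}))"
    using U by (simp add: wsign_singleton)
  finally show ?thesis .
qed

lemma wedge_one_form_left_twice:
  assumes a: "one_form a" and b: "one_form b" and U: "finite U"
  shows "wedge a (wedge b g) U = (\<Sum>u\<in>U. \<Sum>v\<in>U. if u \<noteq> v then
      below_sign u (U - {u}) * a {u} *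
      (below_sign v (U - {u} - {v}) * b {v} * g (U - {u} - {v})) else 0)"
proof (subst wedge_one_form_left[OF a U], rule sum.cong[OF refl])
  fix u assume u: "u \<in> U"
  have "wedge b g (U - {u})
      = (\<Sum>v\<in>U - {u}. below_sign v (U - {u} - {v}) * b {v} * g (U - {u} - {v}))"
    using wedge_one_form_left[OF b] U by simp
  also have "\<dots> = (\<Sum>v\<in>U. if u \<noteq> v then below_sign v (U - {u} - {v}) * b {v} * g (U - {u} - {v}) else 0)"
    using U u by (simp add: sum.If_cases Int_Diff Diff_eq[symmetric]) (rule sum.cong, auto)
  finally show "below_sign u (U - {u}) * a {u} * wedge b g (U - {u}) = (\<Sum>v\<in>U. if u \<noteq> v then
      below_sign u (U - {u}) * a {u} *
      (below_sign v (U - {u} - {v}) * b {v} * g (U - {u} - {v})) else 0)"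
    by (simp add: sum_distrib_left if_distrib cong: if_cong)
qed

lemma wedge_one_form_anticomm:
  assumes a: "one_form a" and b: "one_form b"
  shows "wedge a (wedge b g) U = - wedge b (wedge a g) U"
proof (cases "finite U")
  case False then show ?thesis by (simp add: wedge_infinite_eq_0)
next
  case U: True
  have "(\<Sum>v\<in>U. \<Sum>u\<in>U. if v \<noteq> u then below_sign v (U - {v}) * b {v} *
          (below_sign u (U - {v} - {u}) * a {u} * g (U - {v} - {u})) else 0)
      = (\<Sum>u\<in>U. \<Sum>v\<in>U. if v \<noteq> u then below_sign v (U - {v}) * b {v} *
          (below_sign u (U - {v} - {u}) * a {u} * g (U - {v} - {u})) else 0)"
    by (rule sum.swap)
  moreover have "(if u \<noteq> v then below_sign u (U - {u}) * a {u} *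
          (below_sign v (U - {u} - {v}) * b {v} * g (U - {u} - {v})) else 0)
      = - (if v \<noteq> u then below_sign v (U - {v}) * b {v} *
          (below_sign u (U - {v} - {u}) * a {u} * g (U - {v} - {u})) else 0)"
    if "u \<in> U" "v \<in> U" for u v
  proof (cases "u = v")
    case False
    have "U - {u} - {v} = U - {v} - {u}" by auto
    then show ?thesis using below_sign_swap[OF U that False] False by (simp add: algebra_simps)
  qed simp
  ultimately show ?thesis
    unfolding wedge_one_form_left_twice[OF a b U] wedge_one_form_left_twice[OF b a U]
    by (simp add: sum_negf)
qed

lemma wedge_one_form_self: "one_form a \<Longrightarrow> wedge a (wedge a g) U = 0"
  using wedge_one_form_anticomm[of a a g U] by simp

lemma wedge_list_Cons: "wedge_list (x # xs) = wedge x (wedge_list xs)"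
  unfolding wedge_list_def by simp

lemma wedge_wedge_list_member_eq_0:
  assumes "one_form a" "\<forall>x\<in>set xs. one_form x" "a \<in> set xs"
  shows "wedge a (wedge_list xs) U = 0"
  using assms(2,3)
proof (induction xs arbitrary: U)
  case Nil then show ?case by simp
next
  case (Cons x xs)
  show ?case
  proof (cases "a = x")
    case True then show ?thesis using wedge_one_form_self assms(1) by (simp add: wedge_list_Cons)
  next
    case False
    then have "a \<in> set xs" using Cons by simp
    then have "wedge a (wedge_list xs) = (\<lambda>_. 0)" using Cons by auto
    moreover have "one_form x" using Cons by simp
    ultimately show ?thesis using wedge_one_form_anticomm[OF assms(1), of x "wedge_list xs" U]
      by (simp add: wedge_list_Cons wedge_zero_right)
  qed
qed

lemma wedge_list_insort:
  assumes f: "\<And>y. one_form (f y)" and "sorted L" "distinct L" "x \<notin> set L"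
  shows "wedge_list (map f (insort x L)) U
     = (-1) ^ card {t\<in>set L. t < x} * wedge (f x) (wedge_list (map f L)) U"
  using assms(2-)
proof (induction L arbitrary: U)
  case Nil then show ?case by (simp add: wedge_list_Cons)
next
  case (Cons y L)
  show ?case
  proof (cases "x \<le> y")
    case True
    then have "{t\<in>set (y # L). t < x} = {}" using Cons.prems by auto
    then have c0: "card {t\<in>set (y # L). t < x} = 0" by (simp only: card.empty)
    show ?thesis unfolding c0 using True by (simp add: wedge_list_Cons)
  next
    case False
    then have yx: "y < x" by simp
    have "{t\<in>set (y # L). t < x} = insert y {t\<in>set L. t < x}" using yx by auto
    moreover have "y \<notin> {t\<in>set L. t < x}" using Cons.prems by auto
    ultimately have c: "card {t\<in>set (y # L). t < x} = Suc (card {t\<in>set L. t < x})" by simp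
    have IH: "wedge_list (map f (insort x L))
        = (\<lambda>U. (-1) ^ card {t\<in>set L. t < x} * wedge (f x) (wedge_list (map f L)) U)"
      using Cons by auto
    have "wedge_list (map f (insort x (y # L))) U = wedge (f y) (wedge_list (map f (insort x L))) U"
      using False by (simp add: wedge_list_Cons)
    also have "\<dots> = (-1) ^ card {t\<in>set L. t < x} * wedge (f y) (wedge (f x) (wedge_list (map f L))) U"
      by (simp only: IH wedge_mult_right)
    also have "\<dots> = (-1) ^ card {t\<in>set (y # L). t < x} * wedge (f x) (wedge (f y) (wedge_list (map f L))) U"
      by (simp only: c wedge_one_form_anticomm[OF f f, of y x] power_Suc) simp
    also have "\<dots> = (-1) ^ card {t\<in>set (y # L). t < x} * wedge (f x) (wedge_list (map f (y # L))) U"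
      by (simp only: list.map wedge_list_Cons)
    finally show ?thesis .
  qed
qed

lemma pick_eqI: "x \<in> S \<Longrightarrow> card {a\<in>S. a < x} = i \<Longrightarrow> pick S i = x"
  using pick_card_in_set by blast

lemma bij_betw_pick: "finite U \<Longrightarrow> bij_betw (pick U) {..<card U} U"
proof -
  assume U: "finite U"
  have inj: "inj_on (pick U) {..<card U}"
    by (rule inj_onI) (metis lessThan_iff nat_neq_iff pick_mono)
  have sub: "pick U ` {..<card U} \<subseteq> U" using pick_in_set by auto
  have "card (pick U ` {..<card U}) = card U" using card_image[OF inj] by simp
  then have "pick U ` {..<card U} = U" using card_subset_eq[OF U sub] by simp
  then show ?thesis using inj unfolding bij_betw_def by simp
qed

lemma pick_Diff_pick:
  assumes U: "finite U" and i: "i < card U" and a: "a < card U - 1"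
  shows "pick (U - {pick U i}) a = pick U (if a < i then a else Suc a)"
proof -
  define j where "j = (if a < i then a else Suc a)"
  have j: "j < card U" "j \<noteq> i" using i a unfolding j_def by auto
  have xU: "pick U j \<in> U" using pick_in_set j by auto
  have ne: "pick U j \<noteq> pick U i" using pick_mono[of i U j] pick_mono[of j U i] i j
    by (metis nat_neq_iff)
  have "card {t\<in>U - {pick U i}. t < pick U j} = a"
  proof (cases "a < i")
    case True
    then have "pick U j < pick U i" using pick_mono[of i U j] i unfolding j_def by simp
    then have "{t\<in>U - {pick U i}. t < pick U j} = {t\<in>U. t < pick U j}" by auto
    then show ?thesis using card_pick[of j U] j True unfolding j_def by simp
  next
    case False
    then have "pick U i < pick U j" using pick_mono[of j U i] j unfolding j_def by simp
    then have "{t\<in>U - {pick U i}. t < pick U j} = {t\<in>U. t < pick U j} - {pick U i}" by auto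
    moreover have "pick U i \<in> {t\<in>U. t < pick U j}"
      using pick_in_set[of i U] i \<open>pick U i < pick U j\<close> by simp
    ultimately show ?thesis using card_pick[of j U] j False U unfolding j_def by simp
  qed
  then show ?thesis using xU ne unfolding j_def[symmetric] by (intro pick_eqI) auto
qed

lemma wedge_list_eq_det:
  assumes "\<forall>f\<in>set fs. one_form f" "finite U" "card U = length fs"
  shows "wedge_list fs U = det (mat (length fs) (length fs) (\<lambda>(i,j). (fs!j) {pick U i}))"
  using assms
proof (induction fs arbitrary: U)
  case Nil
  then have "U = {}" by simp
  then show ?case by (simp add: wedge_list_def unit_form_def)
next
  case (Cons f fs)
  define m where "m = length fs"
  have f: "one_form f" and fs: "\<forall>f\<in>set fs. one_form f" using Cons.prems by auto
  have U: "finite U" and cU: "card U = Suc m" using Cons.prems m_def by auto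
  define A where "A = mat (Suc m) (Suc m) (\<lambda>(i,j). ((f # fs)!j) {pick U i})"
  have "wedge_list (f # fs) U
      = (\<Sum>u\<in>U. below_sign u (U - {u}) * f {u} * wedge_list fs (U - {u}))"
    by (simp add: wedge_list_Cons wedge_one_form_left[OF f U])
  also have "\<dots> = (\<Sum>i<Suc m. below_sign (pick U i) (U - {pick U i}) * f {pick U i}
                     * wedge_list fs (U - {pick U i}))"
    using sum.reindex_bij_betw[OF bij_betw_pick[OF U], symmetric] cU by simp
  also have "\<dots> = (\<Sum>i<Suc m. A $$ (i, 0) * cofactor A i 0)"
  proof (rule sum.cong[OF refl])
    fix i assume i: "i \<in> {..<Suc m}"
    then have iU: "i < card U" using cU by simp
    have "{t\<in>U - {pick U i}. t < pick U i} = {t\<in>U. t < pick U i}" by auto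
    then have sign: "below_sign (pick U i) (U - {pick U i}) = (-1) ^ i"
      unfolding below_sign_def using card_pick[of i U] iU by simp
    have fin: "finite (U - {pick U i})" "card (U - {pick U i}) = length fs"
      using U cU pick_in_set[of i U] iU m_def by auto
    have "wedge_list fs (U - {pick U i}) = det (mat m m (\<lambda>(a,b). (fs!b) {pick (U - {pick U i}) a}))"
      using Cons.IH[OF fs fin] m_def by simp
    also have "mat m m (\<lambda>(a,b). (fs!b) {pick (U - {pick U i}) a}) = mat_delete A i 0"
      unfolding mat_delete_def A_def
      by (rule eq_matI) (auto simp: pick_Diff_pick[OF U iU] cU)
    finally have "wedge_list fs (U - {pick U i}) = det (mat_delete A i 0)" .
    moreover have "A $$ (i, 0) = f {pick U i}" using i unfolding A_def by simp
    ultimately show "below_sign (pick U i) (U - {pick U i}) * f {pick U i}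
        * wedge_list fs (U - {pick U i}) = A $$ (i, 0) * cofactor A i 0"
      unfolding cofactor_def sign by simp
  qed
  also have "\<dots> = det A"
    by (rule laplace_expansion_column[symmetric]) (auto simp: A_def)
  finally show ?case unfolding A_def m_def by simp
qed

definition dz :: "nat \<Rightarrow> cform" where
  "dz i T = (if T = {i} then 1 else 0)"

lemma one_form_dz: "one_form (dz i)"
  unfolding one_form_def dz_def by auto

lemma wedge_dz_left:
  assumes U: "finite U"
  shows "wedge (dz i) b U = (if i \<in> U then below_sign i (U - {i}) * b (U - {i}) else 0)"
proof -
  have "wedge (dz i) b U = (\<Sum>u\<in>U. if u = i then below_sign u (U - {u}) * b (U - {u}) else 0)"
    by (subst wedge_one_form_left[OF one_form_dz U]) (rule sum.cong, auto simp: dz_def)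
  also have "\<dots> = (if i \<in> U then below_sign i (U - {i}) * b (U - {i}) else 0)"
    using U by (simp add: sum.delta)
  finally show ?thesis .
qed

lemma foldr_wedge_dz:
  assumes "distinct L" "set L \<subseteq> U" "finite U"
  shows "\<exists>s. (s = 1 \<or> s = -1) \<and> (\<forall>b. foldr wedge (map dz L) b U = s * b (U - set L))"
  using assms
proof (induction L arbitrary: U)
  case Nil then show ?case by (intro exI[of _ 1]) simp
next
  case (Cons x L)
  have "distinct L" "set L \<subseteq> U - {x}" "finite (U - {x})" using Cons.prems by auto
  from Cons.IH[OF this] obtain s where s: "s = 1 \<or> s = -1"
    "\<forall>b. foldr wedge (map dz L) b (U - {x}) = s * b (U - {x} - set L)" by blast
  have xU: "x \<in> U" using Cons.prems by simp
  show ?case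
  proof (intro exI[of _ "below_sign x (U - {x}) * s"] conjI allI)
    show "below_sign x (U - {x}) * s = 1 \<or> below_sign x (U - {x}) * s = -1"
      using s(1) below_sign_cases[of x "U - {x}"] by auto
    fix b
    have "U - {x} - set L = U - set (x # L)" by auto
    then show "foldr wedge (map dz (x # L)) b U = below_sign x (U - {x}) * s * b (U - set (x # L))"
      using s(2) xU Cons.prems(3) by (simp add: wedge_dz_left)
  qed
qed

lemma sorted_list_of_set_nth_eq_pick:
  assumes J: "finite J" and b: "b < card J"
  shows "sorted_list_of_set J ! b = pick J b"
proof -
  define xs where "xs = sorted_list_of_set J"
  have sw: "sorted_wrt (<) xs" and len: "length xs = card J" and st: "set xs = J"
    and d: "distinct xs"
    using J unfolding xs_def by auto
  have lt: "\<And>i j. i < j \<Longrightarrow> j < length xs \<Longrightarrow> xs ! i < xs ! j"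
    using sw by (simp add: sorted_wrt_iff_nth_less)
  have "{a\<in>J. a < xs ! b} = set (take b xs)"
  proof
    show "{a \<in> J. a < xs ! b} \<subseteq> set (take b xs)"
    proof
      fix a assume a: "a \<in> {a \<in> J. a < xs ! b}"
      then obtain c where c: "c < length xs" "a = xs ! c" using st by (auto simp: in_set_conv_nth)
      have "c < b"
      proof (rule ccontr)
        assume "\<not> c < b"
        then have "b = c \<or> b < c" by auto
        then have "xs ! b \<le> xs ! c" using lt[of b c] c by auto
        moreover have "xs ! c < xs ! b" using a c by simp
        ultimately show False by simp
      qed
      then show "a \<in> set (take b xs)" using c by (auto simp: in_set_conv_nth)
    qed
    show "set (take b xs) \<subseteq> {a \<in> J. a < xs ! b}"
    proof
      fix a assume "a \<in> set (take b xs)"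
      then obtain c where c: "c < b" "a = xs ! c" using b len by (auto simp: in_set_conv_nth)
      then show "a \<in> {a \<in> J. a < xs ! b}" using lt[of c b] b len st c(2)
        by (metis (mono_tags, lifting) mem_Collect_eq nth_mem order.strict_trans)
    qed
  qed
  moreover have "card (set (take b xs)) = b" using d b len by (simp add: distinct_card)
  moreover have "xs ! b \<in> J" using b len st by auto
  ultimately have "pick J b = xs ! b" by (intro pick_eqI) auto
  then show ?thesis unfolding xs_def by simp
qed

lemma inj_on_minus_ge:
  fixes J :: "nat set"
  assumes "\<forall>j\<in>J. n \<le> j" shows "inj_on (\<lambda>j. j - n) J"
  using assms by (intro inj_onI) (metis le_add_diff_inverse2)

lemma pick_image_minus:
  assumes J: "finite J" and ge: "\<forall>j\<in>J. n \<le> j" and b: "b < card J"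
  shows "pick ((\<lambda>j. j - n) ` J) b = pick J b - n"
proof (rule pick_eqI)
  have pJ: "pick J b \<in> J" using pick_in_set b by auto
  then show "pick J b - n \<in> (\<lambda>j. j - n) ` J" by auto
  have "{a \<in> (\<lambda>j. j - n) ` J. a < pick J b - n} = (\<lambda>j. j - n) ` {a\<in>J. a < pick J b}"
  proof (rule equalityI; rule subsetI)
    fix x assume "x \<in> {a \<in> (\<lambda>j. j - n) ` J. a < pick J b - n}"
    then obtain j where j: "j \<in> J" "x = j - n" "j - n < pick J b - n" by auto
    then have "j < pick J b" using ge pJ by (metis diff_le_mono not_le)
    then show "x \<in> (\<lambda>j. j - n) ` {a\<in>J. a < pick J b}" using j by auto
  next
    fix x assume "x \<in> (\<lambda>j. j - n) ` {a\<in>J. a < pick J b}"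
    then obtain j where j: "j \<in> J" "x = j - n" "j < pick J b" by auto
    then have "j - n < pick J b - n" using ge by (meson diff_less_mono)
    then show "x \<in> {a \<in> (\<lambda>j. j - n) ` J. a < pick J b - n}" using j by auto
  qed
  moreover have "card ((\<lambda>j. j - n) ` {a\<in>J. a < pick J b}) = card {a\<in>J. a < pick J b}"
    by (rule card_image) (rule inj_on_subset[OF inj_on_minus_ge[OF ge]], auto)
  ultimately show "card {a \<in> (\<lambda>j. j - n) ` J. a < pick J b - n} = b"
    using card_pick[of b J] b by simp
qed

lemma sorted_list_of_set_Un_less:
  assumes "finite I" "finite J" "\<forall>i\<in>I. \<forall>j\<in>J. i < j"
  shows "sorted_list_of_set (I \<union> J) = sorted_list_of_set I @ sorted_list_of_set J"
proof -
  have d: "I \<inter> J = {}" using assms(3) by auto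
  have "sorted_wrt (<) (sorted_list_of_set I @ sorted_list_of_set J) \<and>
     set (sorted_list_of_set I @ sorted_list_of_set J) = I \<union> J \<and>
     length (sorted_list_of_set I @ sorted_list_of_set J) = card (I \<union> J)"
    using assms d by (simp add: sorted_wrt_append card_Un_disjoint)
  then show ?thesis using sorted_list_of_set.sorted_key_list_of_set_unique[of "I \<union> J"] assms
    by (simp only: map_ident finite_Un subset_UNIV simp_thms)
qed

section \<open>Pullbacks of monomials are minors\<close>

lemma one_form_pull1: "one_form (pull1 n Q s)"
  unfolding one_form_def pull1_def by auto

lemma pull1_singleton:
  "pull1 n Q s {r} = (if r < n then (if s < n then (if s = r then 1 else 0) else Q $$ (r, s - n)) else 0)"
  unfolding pull1_def by auto

lemma pull1_dz: "i < n \<Longrightarrow> pull1 n Q i = dz i"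
  unfolding pull1_def dz_def by (rule ext) auto

lemma pull1_dw: "i < n \<Longrightarrow> pull1 n Q (n + i) = (\<lambda>T. \<Sum>j<n. Q $$ (j, i) * dz j T)"
proof (rule ext)
  fix T assume i: "i < n"
  show "pull1 n Q (n + i) T = (\<Sum>j<n. Q $$ (j, i) * dz j T)"
  proof (cases "\<exists>r<n. T = {r}")
    case True
    then obtain r where r: "r < n" "T = {r}" by auto
    have "(\<Sum>j<n. Q $$ (j, i) * dz j T) = (\<Sum>j<n. if j = r then Q $$ (j, i) else 0)"
      by (rule sum.cong) (auto simp: dz_def r)
    also have "\<dots> = Q $$ (r, i)" using r by (simp add: sum.delta)
    finally show ?thesis using r by (simp add: pull1_singleton)
  next
    case False
    then have "dz j T = 0" if "j < n" for j using that unfolding dz_def by auto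
    then show ?thesis using False unfolding pull1_def by auto
  qed
qed

definition pull_wedge :: "nat \<Rightarrow> complex mat \<Rightarrow> nat set \<Rightarrow> cform" where
  "pull_wedge n Q S = wedge_list (map (pull1 n Q) (sorted_list_of_set S))"

lemma P_form_eq_sum_pull_wedge:
  "P_form n \<tau> Q = (\<Sum>S\<in>{S. S \<subseteq> {0..<2*n}}. \<tau> S * pull_wedge n Q S {0..<n})"
  unfolding P_form_def pull_wedge_def by simp

lemma pull_wedge_insert:
  assumes "finite T" "x \<notin> T"
  shows "pull_wedge n Q (insert x T) U
       = (-1) ^ card {t\<in>T. t < x} * wedge (pull1 n Q x) (pull_wedge n Q T) U"
proof -
  have "sorted_list_of_set (insert x T) = insort x (sorted_list_of_set T)"
    using assms by (simp add: sorted_list_of_set_insert)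
  then show ?thesis unfolding pull_wedge_def
    using wedge_list_insort[of "pull1 n Q" "sorted_list_of_set T" x U] assms one_form_pull1 by simp
qed

lemma pull1_matrix_eq_submatrix:
  assumes Q: "Q \<in> carrier_mat n n" and V: "V \<subseteq> {0..<n}" "card V = k"
    and J: "J \<subseteq> {n..<2*n}" "card J = k"
  shows "mat k k (\<lambda>(i,j). (map (pull1 n Q) (sorted_list_of_set J) ! j) {pick V i})
       = submatrix Q V ((\<lambda>j. j - n) ` J)"
proof -
  have fin: "finite V" "finite J" using V J finite_subset by auto
  have cJ': "card ((\<lambda>j. j - n) ` J) = k"
    using card_image[OF inj_on_minus_ge[of J n]] J by fastforce
  have d1: "card {i. i < dim_row Q \<and> i \<in> V} = k"
  proof -
    have "{i. i < dim_row Q \<and> i \<in> V} = V" using Q V by auto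
    then show ?thesis using V by simp
  qed
  have d2: "card {j. j < dim_col Q \<and> j \<in> (\<lambda>j. j - n) ` J} = k"
  proof -
    have "{j. j < dim_col Q \<and> j \<in> (\<lambda>j. j - n) ` J} = (\<lambda>j. j - n) ` J"
      using Q J by (auto simp: subset_iff)
    then show ?thesis using cJ' by simp
  qed
  show ?thesis
  proof (rule eq_matI)
    fix i j assume i: "i < dim_row (submatrix Q V ((\<lambda>j. j - n) ` J))"
      and j: "j < dim_col (submatrix Q V ((\<lambda>j. j - n) ` J))"
    then have ik: "i < k" and jk: "j < k" using d1 d2 by (auto simp: dim_submatrix)
    have pV: "pick V i \<in> V" using pick_in_set[of i V] ik V by simp
    have yj: "sorted_list_of_set J ! j = pick J j"
      using sorted_list_of_set_nth_eq_pick[of J j] fin jk J by simp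
    have pJ: "pick J j \<in> J" using pick_in_set[of j J] jk J by simp
    have pJ': "pick ((\<lambda>j. j - n) ` J) j = pick J j - n"
      using pick_image_minus[of J n j] fin jk J by (auto simp: subset_iff)
    show "mat k k (\<lambda>(i,j). (map (pull1 n Q) (sorted_list_of_set J) ! j) {pick V i}) $$ (i, j)
        = submatrix Q V ((\<lambda>j. j - n) ` J) $$ (i, j)"
      using ik jk d1 d2 pV pJ J V fin
      unfolding submatrix_index[OF i[unfolded dim_submatrix] j[unfolded dim_submatrix]]
      by (auto simp: yj pull1_singleton pJ')
  qed (auto simp: dim_submatrix d1 d2)
qed

lemma pull_wedge_eq_minor:
  assumes S: "S \<subseteq> {0..<2*n}" and cJ: "card (S \<inter> {n..<2*n}) = k"
    and cI: "card (S \<inter> {0..<n}) = n - k" and kn: "k \<le> n"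
  shows "\<exists>s. (s = 1 \<or> s = -1) \<and> (\<forall>Q \<in> carrier_mat n n.
     pull_wedge n Q S {0..<n} = s * minor Q ({0..<n} - S) ((\<lambda>j. j - n) ` (S \<inter> {n..<2*n})))"
proof -
  define I where "I = S \<inter> {0..<n}"
  define J where "J = S \<inter> {n..<2*n}"
  define V where "V = {0..<n} - S"
  define xs where "xs = sorted_list_of_set I"
  define ys where "ys = sorted_list_of_set J"
  have fin: "finite I" "finite J" unfolding I_def J_def by auto
  have "S = I \<union> J" using S unfolding I_def J_def by auto
  then have sS: "sorted_list_of_set S = xs @ ys"
    unfolding xs_def ys_def using sorted_list_of_set_Un_less[OF fin] by (auto simp: I_def J_def)
  have V: "V = {0..<n} - set xs" using fin unfolding V_def xs_def I_def by auto
  obtain s where s: "s = 1 \<or> s = -1"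
    "\<forall>b. foldr wedge (map dz xs) b {0..<n} = s * b ({0..<n} - set xs)"
    using foldr_wedge_dz[of xs "{0..<n}"] fin unfolding xs_def I_def by auto
  have cV: "card V = k"
  proof -
    have "V = {0..<n} - I" unfolding V_def I_def by auto
    then show ?thesis using cI kn by (simp add: card_Diff_subset I_def)
  qed
  show ?thesis
  proof (intro exI[of _ s] conjI ballI)
    show "s = 1 \<or> s = -1" by fact
    fix Q :: "complex mat" assume Q: "Q \<in> carrier_mat n n"
    have mx: "map (pull1 n Q) xs = map dz xs"
      using fin unfolding xs_def I_def by (intro map_cong) (auto simp: pull1_dz)
    have "pull_wedge n Q S {0..<n} = foldr wedge (map dz xs) (wedge_list (map (pull1 n Q) ys)) {0..<n}"
      unfolding pull_wedge_def sS by (simp add: wedge_list_def mx)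
    also have "\<dots> = s * wedge_list (map (pull1 n Q) ys) V"
      using s(2) V by simp
    also have "wedge_list (map (pull1 n Q) ys) V
        = det (mat k k (\<lambda>(i,j). (map (pull1 n Q) ys ! j) {pick V i}))"
      using wedge_list_eq_det[of "map (pull1 n Q) ys" V] cV cJ one_form_pull1
      unfolding V_def ys_def J_def by auto
    also have "mat k k (\<lambda>(i,j). (map (pull1 n Q) ys ! j) {pick V i}) = submatrix Q V ((\<lambda>j. j - n) ` J)"
      unfolding ys_def using pull1_matrix_eq_submatrix[OF Q _ cV _ cJ[folded J_def]]
      unfolding V_def J_def by auto
    finally show "pull_wedge n Q S {0..<n} = s * minor Q ({0..<n} - S) ((\<lambda>j. j - n) ` (S \<inter> {n..<2*n}))"
      unfolding minor_def V_def J_def .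
  qed
qed

definition support_of_minor :: "nat \<Rightarrow> nat set \<times> nat set \<Rightarrow> nat set" where
  "support_of_minor n RC = ({0..<n} - fst RC) \<union> ((\<lambda>j. j + n) ` snd RC)"

definition minor_of_support :: "nat \<Rightarrow> nat set \<Rightarrow> nat set \<times> nat set" where
  "minor_of_support n S = ({0..<n} - S, (\<lambda>j. j - n) ` (S \<inter> {n..<2*n}))"

definition supports :: "nat \<Rightarrow> nat \<Rightarrow> nat set set" where
  "supports n k = {S. S \<subseteq> {0..<2*n} \<and> card (S \<inter> {n..<2*n}) = k \<and> card (S \<inter> {0..<n}) = n - k}"

lemma minor_of_support_of_minor:
  assumes "R \<subseteq> {0..<n}" "C \<subseteq> {0..<n}"
  shows "minor_of_support n (support_of_minor n (R, C)) = (R, C)"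
proof -
  have 1: "{0..<n} - (({0..<n} - R) \<union> (\<lambda>j. j + n) ` C) = R" using assms by auto
  have "(({0..<n} - R) \<union> (\<lambda>j. j + n) ` C) \<inter> {n..<2*n} = (\<lambda>j. j + n) ` C" using assms by auto
  then have 2: "(\<lambda>j. j - n) ` ((({0..<n} - R) \<union> (\<lambda>j. j + n) ` C) \<inter> {n..<2*n}) = C"
    by (simp add: image_image)
  show ?thesis unfolding minor_of_support_def support_of_minor_def using 1 2 by simp
qed

lemma bij_betw_support_of_minor:
  assumes kn: "k \<le> n"
  shows "bij_betw (support_of_minor n) (minor_index n k) (supports n k)"
proof (rule bij_betw_byWitness[where f' = "minor_of_support n"])
  show "\<forall>RC\<in>minor_index n k. minor_of_support n (support_of_minor n RC) = RC"
    using minor_of_support_of_minor unfolding minor_index_def by auto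
  show "\<forall>S\<in>supports n k. support_of_minor n (minor_of_support n S) = S"
  proof
    fix S assume "S \<in> supports n k"
    then have S: "S \<subseteq> {0..<2*n}" unfolding supports_def by auto
    have "(\<lambda>j. j - n + n) ` (S \<inter> {n..<2*n}) = (\<lambda>j. j) ` (S \<inter> {n..<2*n})"
      by (rule image_cong) auto
    then have "(\<lambda>j. j + n) ` (\<lambda>j. j - n) ` (S \<inter> {n..<2*n}) = S \<inter> {n..<2*n}"
      by (simp add: image_image)
    then show "support_of_minor n (minor_of_support n S) = S"
      unfolding minor_of_support_def support_of_minor_def using S by auto
  qed
  show "support_of_minor n ` minor_index n k \<subseteq> supports n k"
  proof
    fix S assume "S \<in> support_of_minor n ` minor_index n k"
    then obtain R C where RC: "S = support_of_minor n (R, C)" "R \<subseteq> {0..<n}" "C \<subseteq> {0..<n}"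
      "card R = k" "card C = k"
      unfolding minor_index_def by auto
    have "S \<inter> {n..<2*n} = (\<lambda>j. j + n) ` C" "S \<inter> {0..<n} = {0..<n} - R"
      "S \<subseteq> {0..<2*n}"
      using RC unfolding support_of_minor_def by auto
    moreover have "card ((\<lambda>j. j + n) ` C) = k" using RC by (simp add: card_image)
    moreover have "card ({0..<n} - R) = n - k" using RC by (simp add: card_Diff_subset finite_subset)
    ultimately show "S \<in> supports n k" unfolding supports_def by simp
  qed
  show "minor_of_support n ` supports n k \<subseteq> minor_index n k"
  proof
    fix RC assume "RC \<in> minor_of_support n ` supports n k"
    then obtain S where S: "RC = minor_of_support n S" "S \<subseteq> {0..<2*n}"
      "card (S \<inter> {n..<2*n}) = k" "card (S \<inter> {0..<n}) = n - k"
      unfolding supports_def by auto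
    have "{0..<n} - S = {0..<n} - (S \<inter> {0..<n})" by auto
    then have "card ({0..<n} - S) = k" using S kn by (simp add: card_Diff_subset)
    moreover have "card ((\<lambda>j. j - n) ` (S \<inter> {n..<2*n})) = k"
      using card_image[OF inj_on_minus_ge[of "S \<inter> {n..<2*n}" n]] S by simp
    moreover have "(\<lambda>j. j - n) ` (S \<inter> {n..<2*n}) \<subseteq> {0..<n}" by auto
    ultimately show "RC \<in> minor_index n k" unfolding minor_index_def minor_of_support_def S(1) by auto
  qed
qed

lemma P_form_eq_sum_supports:
  assumes "\<tau> \<in> Lambda n k"
  shows "P_form n \<tau> Q = (\<Sum>S\<in>supports n k. \<tau> S * pull_wedge n Q S {0..<n})"
  unfolding P_form_eq_sum_pull_wedge
proof (rule sum.mono_neutral_right)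
  show "finite {S. S \<subseteq> {0..<2*n}}" by (simp add: finite_Collect_subsets)
  show "supports n k \<subseteq> {S. S \<subseteq> {0..<2*n}}" unfolding supports_def by auto
  show "\<forall>S\<in>{S. S \<subseteq> {0..<2*n}} - supports n k. \<tau> S * pull_wedge n Q S {0..<n} = 0"
  proof
    fix S assume S: "S \<in> {S. S \<subseteq> {0..<2*n}} - supports n k"
    have "\<tau> S = 0"
    proof (rule ccontr)
      assume "\<tau> S \<noteq> 0"
      then show False using S assms unfolding Lambda_def supports_def by blast
    qed
    then show "\<tau> S * pull_wedge n Q S {0..<n} = 0" by simp
  qed
qed

lemma P_form_in_M_span:
  assumes kn: "k \<le> n" and tau: "\<tau> \<in> Lambda n k"
  shows "restrict (P_form n \<tau>) (SM n) \<in> M_span n k"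
proof -
  let ?minor = "\<lambda>Q S. minor Q (fst (minor_of_support n S)) (snd (minor_of_support n S))"
  have "\<exists>s. \<forall>Q \<in> carrier_mat n n. pull_wedge n Q S {0..<n} = s * ?minor Q S"
    if "S \<in> supports n k" for S
  proof -
    have S: "S \<subseteq> {0..<2*n}" "card (S \<inter> {n..<2*n}) = k" "card (S \<inter> {0..<n}) = n - k"
      using that unfolding supports_def by auto
    obtain s where "\<forall>Q \<in> carrier_mat n n.
        pull_wedge n Q S {0..<n} = s * minor Q ({0..<n} - S) ((\<lambda>j. j - n) ` (S \<inter> {n..<2*n}))"
      using pull_wedge_eq_minor[OF S kn] by auto
    then show ?thesis unfolding minor_of_support_def by (intro exI[of _ s]) simp
  qed
  then obtain sgn where sgn: "\<And>S Q. S \<in> supports n k \<Longrightarrow> Q \<in> carrier_mat n n \<Longrightarrow>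
      pull_wedge n Q S {0..<n} = sgn S * ?minor Q S"
    by metis
  define c where "c RC = \<tau> (support_of_minor n RC) * sgn (support_of_minor n RC)" for RC
  have "P_form n \<tau> Q = (\<Sum>RC\<in>minor_index n k. c RC * minor Q (fst RC) (snd RC))"
    if "Q \<in> SM n" for Q
  proof -
    have Q: "Q \<in> carrier_mat n n" using that unfolding SM_def by auto
    have "P_form n \<tau> Q = (\<Sum>S\<in>supports n k. \<tau> S * (sgn S * ?minor Q S))"
      unfolding P_form_eq_sum_supports[OF tau] using sgn[OF _ Q] by simp
    also have "\<dots> = (\<Sum>RC\<in>minor_index n k. \<tau> (support_of_minor n RC) *
        (sgn (support_of_minor n RC) * ?minor Q (support_of_minor n RC)))"
      using sum.reindex_bij_betw[OF bij_betw_support_of_minor[OF kn], symmetric] by simp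
    also have "\<dots> = (\<Sum>RC\<in>minor_index n k. c RC * minor Q (fst RC) (snd RC))"
    proof (rule sum.cong[OF refl])
      fix RC assume "RC \<in> minor_index n k"
      then obtain R C where "RC = (R, C)" "R \<subseteq> {0..<n}" "C \<subseteq> {0..<n}"
        unfolding minor_index_def by auto
      then show "\<tau> (support_of_minor n RC) * (sgn (support_of_minor n RC) *
          ?minor Q (support_of_minor n RC)) = c RC * minor Q (fst RC) (snd RC)"
        using minor_of_support_of_minor unfolding c_def by simp
    qed
    finally show ?thesis .
  qed
  then show ?thesis unfolding M_span_def by (blast intro: restrict_ext)
qed

section \<open>Relations from primitivity\<close>

lemma sum_symmetric_antisymmetric_eq_0:
  assumes Q: "\<And>i j. i < n \<Longrightarrow> j < n \<Longrightarrow> Q $$ (i, j) = Q $$ (j, i)"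
    and X: "\<And>i j. X i j = - X j i"
  shows "(\<Sum>i<n. \<Sum>j<n. Q $$ (j, i) * X i j) = (0::complex)"
proof -
  let ?S = "(\<Sum>i<n. \<Sum>j<n. Q $$ (j, i) * X i j)"
  have "?S = (\<Sum>j<n. \<Sum>i<n. Q $$ (j, i) * X i j)" by (rule sum.swap)
  also have "\<dots> = (\<Sum>j<n. \<Sum>i<n. - (Q $$ (i, j) * X j i))"
    using Q X by (intro sum.cong refl) (metis lessThan_iff mult_minus_right)
  also have "\<dots> = - ?S" by (simp add: sum_negf)
  finally show ?thesis by simp
qed

(* The sum is F_Q^* omega_s ^ g. *)

lemma pullback_omega_s_eq_0:
  assumes Q: "Q \<in> SM n"
  shows "(\<Sum>i<n. wedge (pull1 n Q i) (wedge (pull1 n Q (n + i)) g) U) = 0"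
proof -
  have Qs: "Q $$ (i, j) = Q $$ (j, i)" if "i < n" "j < n" for i j
    using Q that unfolding SM_def
    by (metis (mono_tags, lifting) carrier_matD index_transpose_mat mem_Collect_eq)
  have "(\<Sum>i<n. wedge (pull1 n Q i) (wedge (pull1 n Q (n + i)) g) U)
      = (\<Sum>i<n. \<Sum>j<n. Q $$ (j, i) * wedge (dz i) (wedge (dz j) g) U)"
  proof (rule sum.cong[OF refl])
    fix i assume i: "i \<in> {..<n}"
    have "wedge (pull1 n Q (n + i)) g = (\<lambda>V. \<Sum>j<n. Q $$ (j, i) * wedge (dz j) g V)"
      using i by (simp add: pull1_dw wedge_sum_left fun_eq_iff)
    then show "wedge (pull1 n Q i) (wedge (pull1 n Q (n + i)) g) U
        = (\<Sum>j<n. Q $$ (j, i) * wedge (dz i) (wedge (dz j) g) U)"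
      using i by (simp add: pull1_dz wedge_sum_right)
  qed
  also have "\<dots> = 0"
    by (rule sum_symmetric_antisymmetric_eq_0[OF Qs])
       (assumption+, rule wedge_one_form_anticomm[OF one_form_dz one_form_dz])
  finally show ?thesis .
qed

lemma wedge_pull1_pair_pull_wedge_eq_0:
  assumes "finite T" "i \<in> T \<or> n + i \<in> T"
  shows "wedge (pull1 n Q i) (wedge (pull1 n Q (n + i)) (pull_wedge n Q T)) U = 0"
proof -
  have inset: "pull1 n Q x \<in> set (map (pull1 n Q) (sorted_list_of_set T))" if "x \<in> T" for x
    using that assms(1) by simp
  have forms: "\<forall>x\<in>set (map (pull1 n Q) (sorted_list_of_set T)). one_form x"
    using one_form_pull1 by auto
  have vanish: "wedge (pull1 n Q x) (pull_wedge n Q T) = (\<lambda>_. 0)" if "x \<in> T" for x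
    using wedge_wedge_list_member_eq_0[OF one_form_pull1 forms inset[OF that]]
    unfolding pull_wedge_def by auto
  show ?thesis
  proof (cases "n + i \<in> T")
    case True
    then show ?thesis by (simp add: vanish wedge_zero_right)
  next
    case False
    then have "i \<in> T" using assms(2) by auto
    then show ?thesis
      using wedge_one_form_anticomm[OF one_form_pull1 one_form_pull1, of n Q i n Q "n + i"]
      by (simp add: vanish wedge_zero_right)
  qed
qed

lemma pull_wedge_primitive_relation:
  assumes Q: "Q \<in> SM n" and T: "T \<subseteq> {0..<2*n}"
  shows "(\<Sum>i\<in>{i. i < n \<and> i \<notin> T \<and> n + i \<notin> T}.
           wsign {i, n + i} T * pull_wedge n Q (insert i (insert (n + i) T)) {0..<n}) = 0"
proof -
  have fT: "finite T" using T finite_subset by blast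
  let ?h = "\<lambda>i. wedge (pull1 n Q i) (wedge (pull1 n Q (n + i)) (pull_wedge n Q T)) {0..<n}"
  have "(\<Sum>i\<in>{i. i < n \<and> i \<notin> T \<and> n + i \<notin> T}.
          wsign {i, n + i} T * pull_wedge n Q (insert i (insert (n + i) T)) {0..<n})
      = (\<Sum>i\<in>{i. i < n \<and> i \<notin> T \<and> n + i \<notin> T}. ?h i)"
  proof (rule sum.cong[OF refl])
    fix i assume "i \<in> {i. i < n \<and> i \<notin> T \<and> n + i \<notin> T}"
    then have i: "i < n" "i \<notin> T" "n + i \<notin> T" by auto
    have c: "{t\<in>insert (n + i) T. t < i} = {t\<in>T. t < i}" by auto
    have inner: "pull_wedge n Q (insert (n + i) T)
        = (\<lambda>U. (-1) ^ card {t\<in>T. t < n + i} * wedge (pull1 n Q (n + i)) (pull_wedge n Q T) U)"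
      using pull_wedge_insert[OF fT i(3)] by auto
    have "pull_wedge n Q (insert i (insert (n + i) T)) {0..<n}
        = (-1) ^ card {t\<in>insert (n + i) T. t < i}
          * wedge (pull1 n Q i) (pull_wedge n Q (insert (n + i) T)) {0..<n}"
      by (rule pull_wedge_insert) (use fT i in auto)
    then have "pull_wedge n Q (insert i (insert (n + i) T)) {0..<n}
       = (-1) ^ card {t\<in>T. t < i} * ((-1) ^ card {t\<in>T. t < n + i} * ?h i)"
      unfolding c inner wedge_mult_right .
    then show "wsign {i, n + i} T * pull_wedge n Q (insert i (insert (n + i) T)) {0..<n} = ?h i"
      unfolding wsign_pair[OF i(1) fT]
      by (simp add: algebra_simps power_mult_distrib[symmetric] flip: power_add)
  qed
  also have "\<dots> = (\<Sum>i<n. ?h i)"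
    by (rule sum.mono_neutral_left)
       (auto intro: wedge_pull1_pair_pull_wedge_eq_0[OF fT])
  also have "\<dots> = 0" using pullback_omega_s_eq_0[OF Q] .
  finally show ?thesis .
qed

lemma wedge_omega_s_left:
  assumes U: "finite U"
  shows "wedge (omega_s n) \<tau> U = (\<Sum>i\<in>{i. i < n \<and> i \<in> U \<and> n + i \<in> U}.
           wsign {i, n + i} (U - {i, n + i}) * \<tau> (U - {i, n + i}))"
proof -
  let ?I = "{i. i < n \<and> i \<in> U \<and> n + i \<in> U}"
  let ?pair = "\<lambda>i. {i, n + i}"
  have "wedge (omega_s n) \<tau> U = (\<Sum>A\<in>?pair ` ?I. wsign A (U - A) * omega_s n A * \<tau> (U - A))"
    unfolding wedge_def
  proof (rule sum.mono_neutral_right)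
    show "finite (Pow U)" using U by simp
    show "?pair ` ?I \<subseteq> Pow U" by auto
    show "\<forall>A\<in>Pow U - ?pair ` ?I. wsign A (U - A) * omega_s n A * \<tau> (U - A) = 0"
      unfolding omega_s_def by auto
  qed
  also have "\<dots> = (\<Sum>i\<in>?I. wsign (?pair i) (U - ?pair i) * omega_s n (?pair i) * \<tau> (U - ?pair i))"
  proof (rule sum.reindex[unfolded comp_def])
    show "inj_on ?pair ?I"
    proof (rule inj_onI)
      fix i j assume "i \<in> ?I" "j \<in> ?I" "{i, n + i} = {j, n + j}"
      then have "i \<in> {j, n + j}" "j \<in> {i, n + i}" "i < n" "j < n" by auto
      then show "i = j" by auto
    qed
  qed
  also have "\<dots> = (\<Sum>i\<in>?I. wsign {i, n + i} (U - {i, n + i}) * \<tau> (U - {i, n + i}))"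
  proof (intro sum.cong refl)
    fix i assume "i \<in> ?I"
    then have "omega_s n {i, n + i} = 1" unfolding omega_s_def by auto
    then show "wsign {i, n + i} (U - {i, n + i}) * omega_s n {i, n + i} * \<tau> (U - {i, n + i})
        = wsign {i, n + i} (U - {i, n + i}) * \<tau> (U - {i, n + i})" by simp
  qed
  finally show ?thesis .
qed

lemma P_form_linear_combination:
  "P_form n (\<lambda>S. \<Sum>a\<in>A. c a * t a S) Q = (\<Sum>a\<in>A. c a * P_form n (t a) Q)"
  unfolding P_form_def by (simp add: sum_distrib_left sum_distrib_right mult_ac sum.swap[of _ A])

lemma PLambda_linear_combination:
  assumes "\<forall>a\<in>A. t a \<in> PLambda n k"
  shows "(\<lambda>S. \<Sum>a\<in>A. c a * t a S) \<in> PLambda n k"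
  unfolding PLambda_def
proof (rule CollectI, rule conjI)
  show "(\<lambda>S. \<Sum>a\<in>A. c a * t a S) \<in> Lambda n k"
    unfolding Lambda_def
  proof (intro CollectI allI impI)
    fix S assume "(\<Sum>a\<in>A. c a * t a S) \<noteq> 0"
    then obtain a where a: "a \<in> A" "c a * t a S \<noteq> 0" by (rule sum.not_neutral_contains_not_neutral)
    then have "t a S \<noteq> 0" by simp
    moreover have "t a \<in> Lambda n k" using assms a unfolding PLambda_def by auto
    ultimately show "S \<subseteq> {0..<2 * n} \<and> card (S \<inter> {0..<n}) = n - k \<and> card (S \<inter> {n..<2 * n}) = k"
      unfolding Lambda_def by blast
  qed
next
  have "wedge (omega_s n) (t a) = (\<lambda>_. 0)" if "a \<in> A" for a
    using assms that unfolding PLambda_def by auto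
  then show "wedge (omega_s n) (\<lambda>S. \<Sum>a\<in>A. c a * t a S) = (\<lambda>_. 0)"
    by (simp add: wedge_sum_right fun_eq_iff)
qed

lemma PLambda_scale: "t \<in> PLambda n k \<Longrightarrow> (\<lambda>S. a * t S) \<in> PLambda n k"
  using PLambda_linear_combination[where A="{()}" and t="\<lambda>_. t" and c="\<lambda>_. a"] by simp

lemma P_form_scale: "P_form n (\<lambda>S. a * t S) Q = a * P_form n t Q"
  using P_form_linear_combination[where A="{()}" and t="\<lambda>_. t" and c="\<lambda>_. a"] by simp

section \<open>A primitive form for each minor\<close>

lemma sum_card_Diff_singleton_Int:
  fixes h :: "nat \<Rightarrow> 'a::comm_semiring_1"
  assumes Z: "finite Z"
  shows "(\<Sum>i\<in>Z. h (card ((Z - {i}) \<inter> S))) =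
    of_nat (card (Z \<inter> S)) * h (card (Z \<inter> S) - 1) + of_nat (card Z - card (Z \<inter> S)) * h (card (Z \<inter> S))"
proof -
  let ?j = "card (Z \<inter> S)"
  have "(\<Sum>i\<in>Z. h (card ((Z - {i}) \<inter> S)))
      = (\<Sum>i\<in>Z \<inter> S. h (card ((Z - {i}) \<inter> S))) + (\<Sum>i\<in>Z - S. h (card ((Z - {i}) \<inter> S)))"
    using Z by (metis sum.Int_Diff)
  also have "(\<Sum>i\<in>Z \<inter> S. h (card ((Z - {i}) \<inter> S))) = (\<Sum>i\<in>Z \<inter> S. h (?j - 1))"
  proof (rule sum.cong[OF refl])
    fix i assume "i \<in> Z \<inter> S"
    then have "(Z - {i}) \<inter> S = (Z \<inter> S) - {i}" "i \<in> Z \<inter> S" by auto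
    then show "h (card ((Z - {i}) \<inter> S)) = h (?j - 1)" using Z by simp
  qed
  also have "(\<Sum>i\<in>Z - S. h (card ((Z - {i}) \<inter> S))) = (\<Sum>i\<in>Z - S. h ?j)"
  proof (rule sum.cong[OF refl])
    fix i assume "i \<in> Z - S"
    then have "(Z - {i}) \<inter> S = Z \<inter> S" by auto
    then show "h (card ((Z - {i}) \<inter> S)) = h ?j" by simp
  qed
  also have "card (Z - S) = card Z - ?j"
    using assms by (metis card_Diff_subset_Int finite_Int)
  ultimately show ?thesis by simp
qed

lemma sum_subsets_insert:
  assumes M: "finite M" and m: "1 \<le> m"
  shows "(\<Sum>Y\<in>{Y. Y \<subseteq> M \<and> Suc (card Y) = m}. \<Sum>i\<in>M - Y. f (insert i Y) i)
       = (\<Sum>X\<in>{X. X \<subseteq> M \<and> card X = m}. \<Sum>i\<in>X. f X i)"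
proof -
  let ?Ys = "{Y. Y \<subseteq> M \<and> Suc (card Y) = m}" and ?Xs = "{X. X \<subseteq> M \<and> card X = m}"
  have fin: "finite ?Ys" "finite ?Xs" "\<And>Y. Y \<subseteq> M \<Longrightarrow> finite Y"
    using M by (auto intro: finite_subset)
  have bij: "bij_betw (\<lambda>(Y, i). (insert i Y, i)) (Sigma ?Ys (\<lambda>Y. M - Y)) (Sigma ?Xs (\<lambda>X. X))"
  proof (rule bij_betw_byWitness[where f' = "\<lambda>(X, i). (X - {i}, i)"])
    show "(\<lambda>(Y, i). (insert i Y, i)) ` Sigma ?Ys (\<lambda>Y. M - Y) \<subseteq> Sigma ?Xs (\<lambda>X. X)"
      using fin(3) by auto
    show "(\<lambda>(X, i). (X - {i}, i)) ` Sigma ?Xs (\<lambda>X. X) \<subseteq> Sigma ?Ys (\<lambda>Y. M - Y)"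
      using fin(3) m by (auto simp: card_Diff_singleton)
  qed auto
  have "(\<Sum>Y\<in>?Ys. \<Sum>i\<in>M - Y. f (insert i Y) i) = (\<Sum>(Y, i)\<in>Sigma ?Ys (\<lambda>Y. M - Y). f (insert i Y) i)"
    by (rule sum.Sigma) (use fin M in auto)
  also have "\<dots> = (\<Sum>(X, i)\<in>Sigma ?Xs (\<lambda>X. X). f X i)"
    using sum.reindex_bij_betw[OF bij, of "\<lambda>(X, i). f X i"] by (simp add: split_def)
  also have "\<dots> = (\<Sum>X\<in>?Xs. \<Sum>i\<in>X. f X i)"
    by (rule sum.Sigma[symmetric]) (use fin in auto)
  finally show ?thesis .
qed

definition prim_weight :: "nat \<Rightarrow> nat \<Rightarrow> complex" where
  "prim_weight m j = (-1) ^ j * fact j * fact (m - j)"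

lemma prim_weight_recurrence:
  assumes "1 \<le> j" "j \<le> m"
  shows "of_nat j * prim_weight m (j - 1) + of_nat (Suc m - j) * prim_weight m j = 0"
proof -
  obtain j' where j: "j = Suc j'" using assms by (cases j) auto
  obtain d where d: "m - j' = Suc d" using assms j by (metis Suc_diff_Suc Suc_le_eq)
  then have d2: "m - Suc j' = d" by simp
  have "of_nat j * prim_weight m (j - 1) = (-1) ^ j' * (of_nat (Suc j') * fact j') * fact (Suc d)"
    by (simp add: prim_weight_def j d)
  also have "\<dots> = (-1) ^ j' * fact (Suc j') * fact (Suc d)" by simp
  finally have 1: "of_nat j * prim_weight m (j - 1) = (-1) ^ j' * fact (Suc j') * fact (Suc d)" .
  have "of_nat (Suc m - j) * prim_weight m j = of_nat (Suc d) * ((-1) ^ Suc j' * fact (Suc j') * fact d)"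
    unfolding prim_weight_def j using d by (simp add: d2)
  also have "\<dots> = - ((-1) ^ j' * fact (Suc j') * (of_nat (Suc d) * fact d))" by simp
  also have "\<dots> = - ((-1) ^ j' * fact (Suc j') * fact (Suc d))" by (simp del: of_nat_Suc)
  finally show ?thesis using 1 by simp
qed

(* Weighting the relations of pull_wedge_support_relation by prim_potential reproduces the
   coefficients prim_weight of tau, except for the term X = target (prim_potential_recurrence). *)
definition prim_potential :: "nat \<Rightarrow> nat \<Rightarrow> complex" where
  "prim_potential m j = (-1) ^ j * of_nat (Suc j) * fact j * fact (m - Suc j)"

lemma prim_potential_recurrence:
  assumes m1: "1 \<le> m" and jm: "j \<le> m"
  shows "of_nat j * prim_potential m (j - 1) + of_nat (m - j) * prim_potential m j
       = prim_weight m j - (if j = m then (-1) ^ m * fact (Suc m) else 0)"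
proof -
  obtain m' where m': "m = Suc m'" using m1 by (cases m) auto
  consider "j = 0" | "j = m" | "0 < j" "j < m" using jm by linarith
  then show ?thesis
  proof cases
    case 1
    then show ?thesis using m' by (simp add: prim_potential_def prim_weight_def)
  next
    case 2
    have "of_nat j * prim_potential m (j - 1)
        = of_nat (Suc m') * ((-1) ^ m' * of_nat (Suc m') * fact m')"
      using 2 m' by (simp add: prim_potential_def)
    also have "\<dots> = (-1) ^ m' * of_nat (Suc m') * fact (Suc m')" by (simp add: algebra_simps)
    finally show ?thesis using 2 m' unfolding prim_weight_def by (simp add: algebra_simps)
  next
    case 3
    obtain j' where j': "j = Suc j'" using 3 by (cases j) auto
    obtain d where d: "m - j = Suc d" using 3 by (metis Suc_diff_Suc zero_less_diff Suc_pred)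
    have d1: "m - Suc j' = Suc d" and d2: "m - Suc (Suc j') = d" using d j' by auto
    have "of_nat j * prim_potential m (j - 1)
        = of_nat (Suc j') * ((-1) ^ j' * of_nat (Suc j') * fact j' * fact (Suc d))"
      using j' d1 by (simp add: prim_potential_def)
    also have "\<dots> = (-1) ^ j' * of_nat (Suc j') * fact (Suc j') * fact (Suc d)"
      by (simp add: algebra_simps)
    finally have a: "of_nat j * prim_potential m (j - 1)
        = (-1) ^ j' * of_nat (Suc j') * fact (Suc j') * fact (Suc d)" .
    have "of_nat (m - j) * prim_potential m j
        = of_nat (Suc d) * ((-1) ^ Suc j' * of_nat (Suc (Suc j')) * fact (Suc j') * fact d)"
      using j' d d2 by (simp add: prim_potential_def)
    also have "\<dots> = - ((-1) ^ j' * of_nat (Suc (Suc j')) * fact (Suc j') * fact (Suc d))"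
      by (simp add: algebra_simps)
    finally have b: "of_nat (m - j) * prim_potential m j
        = - ((-1) ^ j' * of_nat (Suc (Suc j')) * fact (Suc j') * fact (Suc d))" .
    have c: "prim_weight m j = (-1) ^ Suc j' * fact (Suc j') * fact (Suc d)"
      using j' d unfolding prim_weight_def by simp
    show ?thesis using 3 unfolding a b c by (simp add: algebra_simps)
  qed
qed

locale minor_block =
  fixes n :: nat and R C :: "nat set"
  assumes R: "R \<subseteq> {0..<n}" and C: "C \<subseteq> {0..<n}" and card_R_C: "card R = card C"
begin

definition "only_dz = {0..<n} - (R \<union> C)"
definition "only_dw = R \<inter> C"
definition "free = (R - C) \<union> (C - R)"
definition "target = C - R"
definition "m = card target"
(* support X indexes the monomial dx_(only_dz u X) ^ dy_(only_dw u X). *)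
definition "support X = only_dz \<union> X \<union> ((\<lambda>j. n + j) ` (only_dw \<union> X))"

lemma finite_index_sets: "finite R" "finite C" "finite only_dz" "finite only_dw" "finite free" "finite target"
proof -
  show "finite R" "finite C" using R C finite_subset by auto
  then show "finite only_dz" "finite only_dw" "finite free" "finite target"
    unfolding only_dz_def only_dw_def free_def target_def by auto
qed

lemma finite_subset_free: "X \<subseteq> free \<Longrightarrow> finite X"
  using finite_index_sets(5) finite_subset by blast

lemma card_R_minus_C: "card (R - C) = m"
proof -
  have "card (R - C) = card R - card (R \<inter> C)" using finite_index_sets by (simp add: card_Diff_subset_Int)
  moreover have "card (C - R) = card C - card (R \<inter> C)" using finite_index_sets
    by (metis Int_commute card_Diff_subset_Int finite_Int)
  ultimately show ?thesis unfolding m_def target_def using card_R_C by simp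
qed

lemma target_subset_free: "target \<subseteq> free"
  unfolding target_def free_def by auto

lemma card_free_minus_target: "card (free - target) = m"
proof -
  have "free - target = R - C" unfolding free_def target_def by auto
  then show ?thesis using card_R_minus_C by simp
qed

lemma index_cases: "i < n \<Longrightarrow> i \<in> only_dz \<or> i \<in> only_dw \<or> i \<in> free"
  unfolding only_dz_def only_dw_def free_def by auto

lemma index_sets_disjoint: "only_dz \<inter> only_dw = {}" "only_dz \<inter> free = {}" "only_dw \<inter> free = {}"
  unfolding only_dz_def only_dw_def free_def by auto

lemma index_sets_subset: "only_dz \<subseteq> {0..<n}" "only_dw \<subseteq> {0..<n}" "free \<subseteq> {0..<n}"
  unfolding only_dz_def only_dw_def free_def using R C by auto

lemma support_Int_low: "X \<subseteq> free \<Longrightarrow> support X \<inter> {0..<n} = only_dz \<union> X"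
  unfolding support_def using index_sets_subset by auto

lemma support_Int_high:
  "X \<subseteq> free \<Longrightarrow> support X \<inter> {n..<2*n} = (\<lambda>j. n + j) ` (only_dw \<union> X)"
  unfolding support_def using index_sets_subset by auto

lemma support_subset: "X \<subseteq> free \<Longrightarrow> support X \<subseteq> {0..<2*n}"
  unfolding support_def using index_sets_subset by auto

lemma finite_support: "X \<subseteq> free \<Longrightarrow> finite (support X)"
  using support_subset finite_subset by blast

lemma support_Int_free: "X \<subseteq> free \<Longrightarrow> support X \<inter> free = X"
  unfolding support_def using index_sets_subset index_sets_disjoint by auto

lemma mem_support_low: "i < n \<Longrightarrow> i \<in> support X \<longleftrightarrow> i \<in> only_dz \<or> i \<in> X"
  unfolding support_def by auto

lemma mem_support_high: "X \<subseteq> free \<Longrightarrow> n + i \<in> support X \<longleftrightarrow> i \<in> only_dw \<or> i \<in> X"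
  using index_sets_subset unfolding support_def by auto

lemma support_insert: "insert i (insert (n + i) (support X)) = support (insert i X)"
  unfolding support_def by auto

lemma support_remove: "X \<subseteq> free \<Longrightarrow> i \<in> X \<Longrightarrow> support X - {i, n + i} = support (X - {i})"
  unfolding support_def using index_sets_subset index_sets_disjoint by auto

lemma support_in_supports:
  assumes X: "X \<subseteq> free" "card X = m"
  shows "support X \<in> supports n (card R)"
proof -
  have fX: "finite X" using finite_subset_free X by blast
  have "card only_dz + m + card R = n"
  proof -
    have "R \<union> C \<subseteq> {0..<n}" using R C by auto
    then have "card only_dz = n - card (R \<union> C)" "card (R \<union> C) \<le> n"
      unfolding only_dz_def using finite_index_sets by (simp add: card_Diff_subset, metis card_atLeastLessThan card_mono diff_zero finite_atLeastLessThan)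
    moreover have "card (R \<union> (C - R)) = card R + card (C - R)"
      using finite_index_sets by (intro card_Un_disjoint) auto
    then have "card (R \<union> C) = card R + m" unfolding m_def target_def by simp
    ultimately show ?thesis by simp
  qed
  moreover have "card only_dw + m = card R"
  proof -
    have "C = only_dw \<union> target" "only_dw \<inter> target = {}"
      unfolding only_dw_def target_def by auto
    then have "card C = card only_dw + m" using finite_index_sets unfolding m_def by (metis card_Un_disjoint)
    then show ?thesis using card_R_C by simp
  qed
  moreover have "card (support X \<inter> {0..<n}) = card only_dz + m"
    unfolding support_Int_low[OF X(1)] using finite_index_sets fX index_sets_disjoint X by (subst card_Un_disjoint) auto
  moreover have "card (support X \<inter> {n..<2*n}) = card only_dw + m"
  proof -
    have "card (support X \<inter> {n..<2*n}) = card (only_dw \<union> X)"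
      unfolding support_Int_high[OF X(1)] by (simp add: card_image)
    also have "\<dots> = card only_dw + m" using finite_index_sets fX index_sets_disjoint X by (subst card_Un_disjoint) auto
    finally show ?thesis .
  qed
  ultimately show ?thesis unfolding supports_def using support_subset[OF X(1)] by auto
qed

lemma minor_of_support_target: "minor_of_support n (support target) = (R, C)"
proof -
  have "{0..<n} - support target = {0..<n} - (support target \<inter> {0..<n})" by auto
  also have "\<dots> = {0..<n} - (only_dz \<union> target)" using support_Int_low[OF target_subset_free] by simp
  also have "\<dots> = R" unfolding only_dz_def target_def using R C by auto
  finally have 1: "{0..<n} - support target = R" .
  have "(\<lambda>j. j - n) ` (support target \<inter> {n..<2*n}) = (\<lambda>j. n + j - n) ` (only_dw \<union> target)"
    unfolding support_Int_high[OF target_subset_free] by (simp add: image_image)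
  also have "\<dots> = C" unfolding only_dw_def target_def by auto
  finally show ?thesis unfolding minor_of_support_def using 1 by simp
qed

definition "pair_exponent i = card {b\<in>only_dz. b < i} + card only_dz + card {c\<in>only_dw. c < i}"

lemma wsign_pair_support:
  assumes X: "X \<subseteq> free" and i: "i \<in> free" "i \<notin> X"
  shows "wsign {i, n + i} (support X) = (-1) ^ (pair_exponent i + card X)"
proof -
  have iN: "i < n" using i index_sets_subset by auto
  have fX: "finite X" using finite_subset_free X by blast
  let ?x = "card {t\<in>X. t < i}"
  have A1: "{t\<in>support X. t < i} = {t\<in>only_dz. t < i} \<union> {t\<in>X. t < i}"
    unfolding support_def using iN by auto
  have c1: "card {t\<in>support X. t < i} = card {t\<in>only_dz. t < i} + ?x"
    unfolding A1 using finite_index_sets fX index_sets_disjoint X by (intro card_Un_disjoint) auto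
  have A2: "{t\<in>support X. t < n + i}
      = (only_dz \<union> X) \<union> (\<lambda>j. n + j) ` ({c\<in>only_dw. c < i} \<union> {t\<in>X. t < i})"
    unfolding support_def using index_sets_subset X by auto
  have "card {t\<in>support X. t < n + i}
      = card (only_dz \<union> X) + card ((\<lambda>j. n + j) ` ({c\<in>only_dw. c < i} \<union> {t\<in>X. t < i}))"
    unfolding A2 using finite_index_sets fX index_sets_subset X by (intro card_Un_disjoint) auto
  also have "card (only_dz \<union> X) = card only_dz + card X"
    using finite_index_sets fX index_sets_disjoint X by (intro card_Un_disjoint) auto
  also have "card ((\<lambda>j. n + j) ` ({c\<in>only_dw. c < i} \<union> {t\<in>X. t < i}))
      = card ({c\<in>only_dw. c < i} \<union> {t\<in>X. t < i})"
    by (simp add: card_image)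
  also have "\<dots> = card {c\<in>only_dw. c < i} + ?x"
    using finite_index_sets fX index_sets_disjoint X by (intro card_Un_disjoint) auto
  finally have c2: "card {t\<in>support X. t < n + i} = card only_dz + card X + (card {c\<in>only_dw. c < i} + ?x)" .
  have "wsign {i, n + i} (support X) = (-1) ^ (card {t\<in>support X. t < i} + card {t\<in>support X. t < n + i})"
    using wsign_pair[OF iN] fX finite_index_sets unfolding support_def by (simp add: power_add)
  also have "card {t\<in>support X. t < i} + card {t\<in>support X. t < n + i} = (pair_exponent i + card X) + 2 * ?x"
    unfolding c1 c2 pair_exponent_def by simp
  also have "(-1::complex) ^ ((pair_exponent i + card X) + 2 * ?x) = (-1) ^ (pair_exponent i + card X)"
    by (simp add: power_add power_mult)
  finally show ?thesis .
qed


definition "choices = {X. X \<subseteq> free \<and> card X = m}"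
definition "choice_sign X = (-1::complex) ^ (\<Sum>x\<in>X. pair_exponent x)"
definition "choice_coeff X = choice_sign X * prim_weight m (card (X \<inter> target))"
definition "tau U = (if U \<in> support ` choices then choice_coeff (U \<inter> free) else 0)"

lemma finite_choices: "finite choices"
  using finite_index_sets(5) unfolding choices_def by (auto intro: finite_subset[of _ "Pow free"])

lemma target_in_choices: "target \<in> choices"
  unfolding choices_def m_def using target_subset_free by auto

lemma choice_sign_remove: "finite X \<Longrightarrow> i \<in> X \<Longrightarrow> choice_sign X = (-1) ^ pair_exponent i * choice_sign (X - {i})"
  unfolding choice_sign_def by (simp add: sum.remove power_add)

lemma tau_support: "X \<in> choices \<Longrightarrow> tau (support X) = choice_coeff X"
  unfolding tau_def choices_def using support_Int_free by auto

lemma wedge_omega_s_tau_support: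
  assumes Z: "Z \<subseteq> free" "card Z = Suc m"
  shows "wedge (omega_s n) tau (support Z) = 0"
proof -
  have fZ: "finite Z" using finite_subset_free Z by blast
  have pairs: "{i. i < n \<and> i \<in> support Z \<and> n + i \<in> support Z} = Z"
    using Z index_sets_subset index_sets_disjoint mem_support_low mem_support_high[OF Z(1)] by auto
  have "wedge (omega_s n) tau (support Z)
      = (\<Sum>i\<in>Z. (-1) ^ m * choice_sign Z * prim_weight m (card ((Z - {i}) \<inter> target)))"
    unfolding wedge_omega_s_left[OF finite_support[OF Z(1)]] pairs
  proof (rule sum.cong[OF refl])
    fix i assume i: "i \<in> Z"
    have Zi: "Z - {i} \<in> choices" using Z i fZ unfolding choices_def by auto
    have "wsign {i, n + i} (support (Z - {i})) = (-1) ^ (pair_exponent i + m)"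
      using wsign_pair_support[of "Z - {i}" i] Zi i Z unfolding choices_def by auto
    then show "wsign {i, n + i} (support Z - {i, n + i}) * tau (support Z - {i, n + i})
        = (-1) ^ m * choice_sign Z * prim_weight m (card ((Z - {i}) \<inter> target))"
      unfolding support_remove[OF Z(1) i] tau_support[OF Zi] choice_coeff_def
        choice_sign_remove[OF fZ i]
      by (simp add: power_add algebra_simps)
  qed
  also have "\<dots> = (-1) ^ m * choice_sign Z * (\<Sum>i\<in>Z. prim_weight m (card ((Z - {i}) \<inter> target)))"
    by (simp add: sum_distrib_left)
  also have "(\<Sum>i\<in>Z. prim_weight m (card ((Z - {i}) \<inter> target))) = 0"
  proof -
    have "Z \<inter> target \<noteq> {}"
    proof
      assume "Z \<inter> target = {}"
      then have "Z \<subseteq> free - target" using Z by auto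
      then have "card Z \<le> m" using card_mono[of "free - target" Z] finite_index_sets card_free_minus_target by auto
      then show False using Z by simp
    qed
    then have "1 \<le> card (Z \<inter> target)" using fZ by (simp add: Suc_le_eq card_gt_0_iff)
    moreover have "card (Z \<inter> target) \<le> m" unfolding m_def using finite_index_sets by (simp add: card_mono)
    ultimately show ?thesis
      using sum_card_Diff_singleton_Int[OF fZ, of "prim_weight m" target]
        prim_weight_recurrence[of "card (Z \<inter> target)" m] Z(2) by simp
  qed
  finally show ?thesis by simp
qed

lemma wedge_omega_s_tau_other:
  assumes U: "finite U" and not_support: "\<nexists>Z. Z \<subseteq> free \<and> card Z = Suc m \<and> U = support Z"
  shows "wedge (omega_s n) tau U = 0"
  unfolding wedge_omega_s_left[OF U]
proof (rule sum.neutral, rule ballI)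
  fix i assume i: "i \<in> {i. i < n \<and> i \<in> U \<and> n + i \<in> U}"
  have "tau (U - {i, n + i}) = 0"
  proof (rule ccontr)
    assume "tau (U - {i, n + i}) \<noteq> 0"
    then obtain X where X: "X \<subseteq> free" "card X = m" "U - {i, n + i} = support X"
      unfolding tau_def choices_def by (auto split: if_splits)
    have "i \<notin> support X" "n + i \<notin> support X" using X(3) by auto
    then have "i \<notin> only_dz" "i \<notin> X" "i \<notin> only_dw"
      using mem_support_low mem_support_high[OF X(1)] i by auto
    then have "i \<in> free" using index_cases i by auto
    have "U = support (insert i X)"
      using X(3) i support_insert[of i X] by auto
    moreover have "card (insert i X) = Suc m"
      using X \<open>i \<notin> X\<close> finite_subset_free by simp
    ultimately show False using not_support X(1) \<open>i \<in> free\<close> by blast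
  qed
  then show "wsign {i, n + i} (U - {i, n + i}) * tau (U - {i, n + i}) = 0" by simp
qed

lemma tau_PLambda: "tau \<in> PLambda n (card R)"
proof -
  have "tau \<in> Lambda n (card R)"
    unfolding Lambda_def
  proof (intro CollectI allI impI)
    fix S assume "tau S \<noteq> 0"
    then obtain X where "X \<subseteq> free" "card X = m" "S = support X"
      unfolding tau_def choices_def by (auto split: if_splits)
    then show "S \<subseteq> {0..<2 * n} \<and> card (S \<inter> {0..<n}) = n - card R \<and> card (S \<inter> {n..<2 * n}) = card R"
      using support_in_supports unfolding supports_def by auto
  qed
  moreover have "wedge (omega_s n) tau U = 0" for U
    using wedge_infinite_eq_0 wedge_omega_s_tau_support wedge_omega_s_tau_other by metis
  ultimately show ?thesis unfolding PLambda_def by auto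
qed


lemma P_form_tau_eq_sum:
  "P_form n tau Q = (\<Sum>X\<in>choices. choice_coeff X * pull_wedge n Q (support X) {0..<n})"
proof -
  have "P_form n tau Q = (\<Sum>U\<in>support ` choices. tau U * pull_wedge n Q U {0..<n})"
    unfolding P_form_eq_sum_pull_wedge
  proof (rule sum.mono_neutral_right)
    show "finite {S. S \<subseteq> {0..<2*n}}" by (simp add: finite_Collect_subsets)
    show "support ` choices \<subseteq> {S. S \<subseteq> {0..<2*n}}" using support_subset unfolding choices_def by auto
    show "\<forall>U\<in>{S. S \<subseteq> {0..<2*n}} - support ` choices. tau U * pull_wedge n Q U {0..<n} = 0"
      unfolding tau_def by auto
  qed
  also have "\<dots> = (\<Sum>X\<in>choices. tau (support X) * pull_wedge n Q (support X) {0..<n})"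
    by (rule sum.reindex[unfolded comp_def], rule inj_onI)
       (metis choices_def mem_Collect_eq support_Int_free)
  also have "\<dots> = (\<Sum>X\<in>choices. choice_coeff X * pull_wedge n Q (support X) {0..<n})"
    using tau_support by simp
  finally show ?thesis .
qed

lemma pull_wedge_support_relation:
  assumes Q: "Q \<in> SM n" and Y: "Y \<subseteq> free"
  shows "(\<Sum>i\<in>free - Y. (-1) ^ (pair_exponent i + card Y) * pull_wedge n Q (support (insert i Y)) {0..<n}) = 0"
proof -
  have pairs: "{i. i < n \<and> i \<notin> support Y \<and> n + i \<notin> support Y} = free - Y"
  proof (intro equalityI subsetI)
    fix i assume "i \<in> {i. i < n \<and> i \<notin> support Y \<and> n + i \<notin> support Y}"
    then show "i \<in> free - Y"
      using index_cases[of i] mem_support_low[of i Y] mem_support_high[OF Y, of i] by auto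
  next
    fix i assume i: "i \<in> free - Y"
    then have "i < n" "i \<notin> only_dz" "i \<notin> only_dw" using index_sets_subset index_sets_disjoint by auto
    then show "i \<in> {i. i < n \<and> i \<notin> support Y \<and> n + i \<notin> support Y}"
      using mem_support_low[of i Y] mem_support_high[OF Y, of i] i by auto
  qed
  have "0 = (\<Sum>i\<in>{i. i < n \<and> i \<notin> support Y \<and> n + i \<notin> support Y}.
      wsign {i, n + i} (support Y) * pull_wedge n Q (insert i (insert (n + i) (support Y))) {0..<n})"
    using pull_wedge_primitive_relation[OF Q support_subset[OF Y]] by simp
  also have "\<dots> = (\<Sum>i\<in>free - Y. (-1) ^ (pair_exponent i + card Y) * pull_wedge n Q (support (insert i Y)) {0..<n})"
    unfolding pairs support_insert using wsign_pair_support[OF Y] by simp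
  finally show ?thesis by simp
qed

lemma sum_choices_potential_eq_0:
  assumes Q: "Q \<in> SM n" and m1: "1 \<le> m"
  shows "(\<Sum>X\<in>choices. choice_sign X * (\<Sum>i\<in>X. prim_potential m (card ((X - {i}) \<inter> target)))
           * pull_wedge n Q (support X) {0..<n}) = 0"
proof -
  define F where "F X i = choice_sign X * prim_potential m (card ((X - {i}) \<inter> target))
                           * pull_wedge n Q (support X) {0..<n}" for X i
  let ?Ys = "{Y. Y \<subseteq> free \<and> Suc (card Y) = m}"
  have "(\<Sum>Y\<in>?Ys. \<Sum>i\<in>free - Y. F (insert i Y) i)
      = (\<Sum>Y\<in>?Ys. (-1) ^ (m - 1) * choice_sign Y * prim_potential m (card (Y \<inter> target)) *
          (\<Sum>i\<in>free - Y. (-1) ^ (pair_exponent i + card Y) * pull_wedge n Q (support (insert i Y)) {0..<n}))"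
  proof (intro sum.cong refl)
    fix Y assume "Y \<in> ?Ys"
    then have Y: "Y \<subseteq> free" "card Y = m - 1" by auto
    have "F (insert i Y) i = (-1) ^ (m - 1) * choice_sign Y * prim_potential m (card (Y \<inter> target)) *
        ((-1) ^ (pair_exponent i + card Y) * pull_wedge n Q (support (insert i Y)) {0..<n})"
      if i: "i \<in> free - Y" for i
    proof -
      have "insert i Y - {i} = Y" using i by auto
      moreover have "choice_sign (insert i Y) = (-1) ^ pair_exponent i * choice_sign Y"
        using choice_sign_remove[of "insert i Y" i] finite_subset_free Y i by simp
      ultimately show ?thesis unfolding F_def Y(2) by (simp add: power_add mult_ac)
    qed
    then show "(\<Sum>i\<in>free - Y. F (insert i Y) i) = (-1) ^ (m - 1) * choice_sign Y * prim_potential m (card (Y \<inter> target)) *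
          (\<Sum>i\<in>free - Y. (-1) ^ (pair_exponent i + card Y) * pull_wedge n Q (support (insert i Y)) {0..<n})"
      by (simp add: sum_distrib_left)
  qed
  also have "\<dots> = 0" using pull_wedge_support_relation[OF Q] by simp
  finally have "(\<Sum>X\<in>choices. \<Sum>i\<in>X. F X i) = 0"
    unfolding sum_subsets_insert[OF finite_index_sets(5) m1] choices_def .
  moreover have "(\<Sum>X\<in>choices. choice_sign X * (\<Sum>i\<in>X. prim_potential m (card ((X - {i}) \<inter> target)))
      * pull_wedge n Q (support X) {0..<n}) = (\<Sum>X\<in>choices. \<Sum>i\<in>X. F X i)"
    unfolding F_def by (simp only: sum_distrib_left sum_distrib_right mult.assoc)
  ultimately show ?thesis by simp
qed

lemma card_Int_target_eq_m_iff:
  assumes X: "X \<in> choices" shows "card (X \<inter> target) = m \<longleftrightarrow> X = target"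
proof
  assume a: "card (X \<inter> target) = m"
  have X: "X \<subseteq> free" "card X = m" using X unfolding choices_def by auto
  have "X \<inter> target = target" using card_subset_eq[of target "X \<inter> target"] finite_index_sets a unfolding m_def by auto
  then show "X = target" using card_subset_eq[OF finite_subset_free[OF X(1)]] X unfolding m_def by auto
qed (simp add: m_def)

lemma P_form_tau:
  assumes Q: "Q \<in> SM n"
  shows "P_form n tau Q
       = (-1) ^ m * fact (Suc m) * choice_sign target * pull_wedge n Q (support target) {0..<n}"
proof (cases "m = 0")
  case True
  then have "target = {}" using finite_index_sets unfolding m_def by simp
  moreover have "choices = {{}}"
    using True finite_subset_free unfolding choices_def by auto
  ultimately show ?thesis
    unfolding P_form_tau_eq_sum using True by (simp add: choice_coeff_def choice_sign_def prim_weight_def)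
next
  case False
  then have m1: "1 \<le> m" by simp
  let ?W = "\<lambda>X. pull_wedge n Q (support X) {0..<n}" and ?j = "\<lambda>X. card (X \<inter> target)"
  let ?c = "(-1) ^ m * fact (Suc m) :: complex"
  have "prim_weight m (?j X) = (\<Sum>i\<in>X. prim_potential m (card ((X - {i}) \<inter> target)))
      + (if X = target then ?c else 0)" if X: "X \<in> choices" for X
  proof -
    have "finite X" "card X = m" using X finite_subset_free unfolding choices_def by auto
    moreover have "?j X \<le> m" using \<open>card X = m\<close> \<open>finite X\<close> by (metis card_mono inf_le1)
    ultimately show ?thesis
      using sum_card_Diff_singleton_Int[of X "prim_potential m" target]
        prim_potential_recurrence[OF m1] card_Int_target_eq_m_iff[OF X] by simp
  qed
  then have "P_form n tau Q = (\<Sum>X\<in>choices. choice_sign X *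
        (\<Sum>i\<in>X. prim_potential m (card ((X - {i}) \<inter> target))) * ?W X)
      + (\<Sum>X\<in>choices. if X = target then ?c * choice_sign X * ?W X else 0)"
    unfolding P_form_tau_eq_sum choice_coeff_def sum.distrib[symmetric]
    by (intro sum.cong refl) (simp add: algebra_simps)
  also have "\<dots> = ?c * choice_sign target * ?W target"
    using sum_choices_potential_eq_0[OF Q m1] finite_choices target_in_choices
    by (simp add: sum.delta')
  finally show ?thesis .
qed

lemma minor_in_P_image: "\<exists>\<tau>\<in>PLambda n (card R). \<forall>Q\<in>SM n. P_form n \<tau> Q = minor Q R C"
proof -
  have "card R \<le> n" using card_mono[OF _ R] by simp
  moreover have "support target \<in> supports n (card R)"
    using support_in_supports[OF target_subset_free] unfolding m_def by simp
  ultimately obtain s where s: "s = 1 \<or> s = -1" and "\<forall>Q\<in>carrier_mat n n.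
      pull_wedge n Q (support target) {0..<n} = s * minor Q ({0..<n} - support target)
        ((\<lambda>j. j - n) ` (support target \<inter> {n..<2*n}))"
    using pull_wedge_eq_minor[of "support target" n "card R"] unfolding supports_def by auto
  then have pull_wedge_target:
    "\<And>Q. Q \<in> carrier_mat n n \<Longrightarrow> pull_wedge n Q (support target) {0..<n} = s * minor Q R C"
    using minor_of_support_target unfolding minor_of_support_def by simp
  define z where "z = (-1) ^ m * fact (Suc m) * choice_sign target * s"
  have "(fact (Suc m) :: complex) \<noteq> 0" by (rule fact_nonzero)
  then have "z \<noteq> 0" using s unfolding z_def choice_sign_def by (auto simp del: fact_Suc)
  moreover have "P_form n tau Q = z * minor Q R C" if "Q \<in> SM n" for Q
    using P_form_tau[OF that] pull_wedge_target[of Q] that unfolding z_def SM_def by simp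
  ultimately have "\<forall>Q\<in>SM n. P_form n (\<lambda>U. inverse z * tau U) Q = minor Q R C"
    by (simp add: P_form_scale)
  then show ?thesis using PLambda_scale[OF tau_PLambda] by blast
qed

end

lemma minor_index_in_P_image:
  assumes "RC \<in> minor_index n k"
  shows "\<exists>\<tau>\<in>PLambda n k. \<forall>Q\<in>SM n. P_form n \<tau> Q = minor Q (fst RC) (snd RC)"
proof -
  obtain R C where RC: "RC = (R, C)" "R \<subseteq> {0..<n}" "C \<subseteq> {0..<n}" "card R = k" "card C = k"
    using assms unfolding minor_index_def by auto
  interpret minor_block n R C by unfold_locales (use RC in auto)
  show ?thesis using minor_in_P_image RC by simp
qed

lemma M_span_subset_P_image: "M_span n k \<subseteq> (\<lambda>\<tau>. restrict (P_form n \<tau>) (SM n)) ` PLambda n k"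
proof
  fix f assume "f \<in> M_span n k"
  then obtain c where f: "f = restrict (\<lambda>Q. \<Sum>RC\<in>minor_index n k. c RC * minor Q (fst RC) (snd RC)) (SM n)"
    unfolding M_span_def by auto
  have "\<forall>RC\<in>minor_index n k. \<exists>\<tau>. \<tau> \<in> PLambda n k \<and> (\<forall>Q\<in>SM n. P_form n \<tau> Q = minor Q (fst RC) (snd RC))"
    using minor_index_in_P_image by blast
  from bchoice[OF this] obtain T where T: "\<And>RC. RC \<in> minor_index n k \<Longrightarrow> T RC \<in> PLambda n k"
    "\<And>RC Q. RC \<in> minor_index n k \<Longrightarrow> Q \<in> SM n \<Longrightarrow> P_form n (T RC) Q = minor Q (fst RC) (snd RC)"
    by blast
  define \<tau> where "\<tau> = (\<lambda>S. \<Sum>RC\<in>minor_index n k. c RC * T RC S)"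
  have "\<tau> \<in> PLambda n k" unfolding \<tau>_def using T(1) by (intro PLambda_linear_combination) blast
  moreover have "restrict (P_form n \<tau>) (SM n) = f"
    unfolding f \<tau>_def P_form_linear_combination using T(2) by (auto intro!: restrict_ext sum.cong)
  ultimately show "f \<in> (\<lambda>\<tau>. restrict (P_form n \<tau>) (SM n)) ` PLambda n k" by blast
qed

theorem proposition6p8:
  fixes n k :: nat
  assumes "1 \<le> k" and "k \<le> n"
  shows "(\<lambda>\<tau>. restrict (P_form n \<tau>) (SM n)) ` PLambda n k = M_span n k"
proof
  show "(\<lambda>\<tau>. restrict (P_form n \<tau>) (SM n)) ` PLambda n k \<subseteq> M_span n k"
    using P_form_in_M_span[OF assms(2)] unfolding PLambda_def by blast
  show "M_span n k \<subseteq> (\<lambda>\<tau>. restrict (P_form n \<tau>) (SM n)) ` PLambda n k"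
    by (rule M_span_subset_P_image)
qed

end
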